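(* Let $N, B$ be positive integers with $B$ dividing $N$, and $\lambda>0$. Consider all assignment vectors $\bar N=(N_1,\dots,N_B)$ of positive integers with $\sum_{i=1}^B N_i = N$. For each, let $T_1,\dots,T_B$ be independent with $T_i\sim \mathrm{Exp}(N_i\lambda)$ and $T(\bar N)=\max(T_1,\dots,T_B)$. Then the balanced assignment $\bar N_b = (N/B,\dots,N/B)$ minimizes $\mathbb{E}[T(\bar N)]$ over all such assignments, i.e. $\mathbb{E}[T(\bar N)] \ge \mathbb{E}[T(\bar N_b)]$ for every such $\bar N$.
   Context: Interpretation: a data set is split into $B$ disjoint batches, batch $i$ is replicated on $N_i$ of the $N$ workers (each worker hosts exactly one batch); worker service times are i.i.d. $\mathrm{Exp}(\lambda)$; batch $i$ is recovered when the fastest of its $N_i$ workers finishes, and the overall result is available when all batches are recovered, at time $T(\bar N)$. *)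

theory Defs
  imports "HOL-Probability.Probability"
begin

end

theory Submission
  imports Defs
begin

text \<open>
  The maximum of independent \<open>T\<^sub>i \<sim> Exp(r\<^sub>i)\<close> has distribution function
  \<open>\<Prod>\<^sub>i (1 - exp (-t r\<^sub>i))\<close>, and its expectation is the integral of the tail
  \<open>1 - \<Prod>\<^sub>i (1 - exp (-t r\<^sub>i))\<close> over \<open>t \<ge> 0\<close>. Since \<open>y \<mapsto> -ln (1 - exp (-y))\<close>
  is convex on \<open>(0, \<infinity>)\<close>, Jensen's inequality shows that for every \<open>t\<close> the product
  is largest when all rates equal their mean \<open>N\<lambda>/B\<close>; so the balanced assignment
  has the pointwise smallest tail and hence the smallest expectation.
\<close>

lemma convex_on_neg_ln_one_minus_exp: "convex_on {0<..} (\<lambda>y::real. - ln (1 - exp (- y)))"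
proof (rule convex_on_realI[where f'="\<lambda>y. - (exp (-y) / (1 - exp (-y)))"])
  show "connected {0::real<..}" by simp
next
  fix x :: real assume "x \<in> {0<..}"
  then have "exp (-x) < 1" by simp
  then show "((\<lambda>y. - ln (1 - exp (- y))) has_real_derivative - (exp (-x) / (1 - exp (-x)))) (at x)"
    by (auto intro!: derivative_eq_intros)
next
  fix x y :: real assume x: "x \<in> {0<..}" and y: "y \<in> {0<..}" and "x \<le> y"
  have quotient_eq: "exp (-z) / (1 - exp (-z)) = 1 / (exp z - 1)" if "0 < z" for z :: real
  proof -
    have "exp z * exp (-z) = 1" by (simp add: exp_minus)
    moreover have "exp (-z) < 1" "1 < exp z" using that by auto
    ultimately show ?thesis by (simp add: field_simps)
  qed
  have "1 / (exp y - 1) \<le> 1 / (exp x - 1)"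
    using x \<open>x \<le> y\<close> by (intro divide_left_mono) auto
  then show "- (exp (-x) / (1 - exp (-x))) \<le> - (exp (-y) / (1 - exp (-y)))"
    using quotient_eq x y by simp
qed

lemma prod_one_minus_exp_le_mean_power:
  fixes x :: "'i \<Rightarrow> real"
  assumes I: "finite I" "I \<noteq> {}" and pos: "\<And>i. i \<in> I \<Longrightarrow> 0 < x i"
  shows "(\<Prod>i\<in>I. 1 - exp (- x i)) \<le> (1 - exp (- ((\<Sum>i\<in>I. x i) / card I))) ^ card I"
proof -
  let ?m = "(\<Sum>i\<in>I. x i) / card I"
  have card: "0 < real (card I)" using I by (simp add: card_gt_0_iff)
  have "- ln (1 - exp (- (\<Sum>i\<in>I. (1 / card I) *\<^sub>R x i)))
        \<le> (\<Sum>i\<in>I. (1 / card I) * - ln (1 - exp (- x i)))"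
    by (rule convex_on_sum[OF _ _ convex_on_neg_ln_one_minus_exp]) (use I pos in auto)
  then have "(\<Sum>i\<in>I. ln (1 - exp (- x i))) / card I \<le> ln (1 - exp (- ?m))"
    by (simp add: sum_negf sum_divide_distrib)
  then have ln_le: "(\<Sum>i\<in>I. ln (1 - exp (- x i))) \<le> card I * ln (1 - exp (- ?m))"
    using card by (simp add: field_simps)
  have factor_pos: "0 < 1 - exp (- x i)" if "i \<in> I" for i using pos[OF that] by simp
  have mean_pos: "0 < ?m" using I pos by (intro divide_pos_pos sum_pos card) auto
  have "(\<Prod>i\<in>I. 1 - exp (- x i)) = exp (\<Sum>i\<in>I. ln (1 - exp (- x i)))"
    using factor_pos by (auto simp: exp_sum I(1) intro!: prod.cong)
  also have "\<dots> \<le> exp (card I * ln (1 - exp (- ?m)))" using ln_le by simp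
  also have "\<dots> = (1 - exp (- ?m)) ^ card I"
    using mean_pos by (simp add: exp_of_nat_mult)
  finally show ?thesis .
qed

lemma prod_one_minus_exp_le_balanced:
  fixes r :: "'i \<Rightarrow> real"
  assumes I: "finite I" "I \<noteq> {}" and r: "\<And>i. i \<in> I \<Longrightarrow> 0 < r i" and t: "0 \<le> t"
  shows "(\<Prod>i\<in>I. 1 - exp (- t * r i)) \<le> (\<Prod>i\<in>I. 1 - exp (- t * ((\<Sum>j\<in>I. r j) / card I)))"
proof (cases "t = 0")
  case False
  then have "(\<Prod>i\<in>I. 1 - exp (- (t * r i))) \<le> (1 - exp (- ((\<Sum>i\<in>I. t * r i) / card I))) ^ card I"
    using t r by (intro prod_one_minus_exp_le_mean_power[OF I]) auto
  then show ?thesis by (simp add: sum_distrib_left[symmetric])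
qed simp

lemma nn_integral_eq_nn_integral_tail:
  fixes f :: "'a \<Rightarrow> real"
  assumes "sigma_finite_measure M" and f[measurable]: "f \<in> borel_measurable M"
  shows "(\<integral>\<^sup>+x. ennreal (f x) \<partial>M) =
    (\<integral>\<^sup>+t. emeasure M {x\<in>space M. t < f x} * indicator {0..} t \<partial>lborel)"
proof -
  interpret pair_sigma_finite M lborel
    unfolding pair_sigma_finite_def using assms(1) lborel.sigma_finite_measure_axioms by simp
  have "ennreal (f x) = (\<integral>\<^sup>+t. indicator {0..<f x} t \<partial>lborel)" for x
    by (cases "0 \<le> f x") (simp_all add: ennreal_neg)
  then have "(\<integral>\<^sup>+x. ennreal (f x) \<partial>M) = (\<integral>\<^sup>+x. (\<integral>\<^sup>+t. indicator {0..<f x} t \<partial>lborel) \<partial>M)"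
    by simp
  also have "\<dots> = (\<integral>\<^sup>+t. (\<integral>\<^sup>+x. indicator {0..<f x} t \<partial>M) \<partial>lborel)"
  proof (rule Fubini'[symmetric])
    have "(\<lambda>(x, t). indicator {0..<f x} t :: ennreal) = (\<lambda>p. of_bool (0 \<le> snd p \<and> snd p < f (fst p)))"
      by (auto simp: fun_eq_iff split: split_indicator)
    then show "(\<lambda>(x, t). indicator {0..<f x} t :: ennreal) \<in> borel_measurable (M \<Otimes>\<^sub>M lborel)"
      by simp
  qed
  also have "\<dots> = (\<integral>\<^sup>+t. emeasure M {x\<in>space M. t < f x} * indicator {0..} t \<partial>lborel)"
  proof (rule nn_integral_cong)
    fix t :: real
    have "(\<lambda>x. indicator {0..<f x} t :: ennreal) = (\<lambda>x. indicator {x. t < f x} x * indicator {0..} t)"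
      by (auto simp: fun_eq_iff split: split_indicator)
    moreover have "(\<integral>\<^sup>+x. indicator {x. t < f x} x * indicator {0..} t \<partial>M)
        = (\<integral>\<^sup>+x. indicator {x. t < f x} x \<partial>M) * indicator {0..} t"
      by (rule nn_integral_multc) measurable
    moreover have "(\<integral>\<^sup>+x. indicator {x. t < f x} x \<partial>M) = emeasure M ({x. t < f x} \<inter> space M)"
      by (rule nn_integral_indicator') measurable
    moreover have "{x. t < f x} \<inter> space M = {x\<in>space M. t < f x}" by auto
    ultimately show "(\<integral>\<^sup>+x. indicator {0..<f x} t \<partial>M) = emeasure M {x\<in>space M. t < f x} * indicator {0..} t"
      by simp
  qed
  finally show ?thesis .
qed

context prob_space
begin

lemma prob_Max_exponential_le:
  fixes T :: "'i \<Rightarrow> 'a \<Rightarrow> real"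
  assumes I: "finite I" "I \<noteq> {}" and indep: "indep_vars (\<lambda>_. borel) T I"
    and distr: "\<And>i. i \<in> I \<Longrightarrow> distributed M lborel (T i) (exponential_density (r i))"
    and r: "\<And>i. i \<in> I \<Longrightarrow> 0 < r i" and t: "0 \<le> t"
  shows "prob {\<omega>\<in>space M. Max ((\<lambda>i. T i \<omega>) ` I) \<le> t} = (\<Prod>i\<in>I. 1 - exp (- t * r i))"
proof -
  have "{\<omega>\<in>space M. Max ((\<lambda>i. T i \<omega>) ` I) \<le> t} = (\<Inter>i\<in>I. T i -` {..t} \<inter> space M)"
    using I by auto
  then have "prob {\<omega>\<in>space M. Max ((\<lambda>i. T i \<omega>) ` I) \<le> t} = (\<Prod>i\<in>I. prob (T i -` {..t} \<inter> space M))"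
    using indep_varsD_finite[OF indep, of "\<lambda>_. {..t}"] I by simp
  also have "\<dots> = (\<Prod>i\<in>I. 1 - exp (- t * r i))"
  proof (rule prod.cong)
    fix i assume "i \<in> I"
    then have "prob {x\<in>space M. T i x \<le> t} = 1 - exp (- t * r i)"
      using exponential_distributedD_le[OF distr t r] by simp
    moreover have "T i -` {..t} \<inter> space M = {x\<in>space M. T i x \<le> t}" by auto
    ultimately show "prob (T i -` {..t} \<inter> space M) = 1 - exp (- t * r i)" by simp
  qed simp
  finally show ?thesis .
qed

lemma nn_integral_Max_exponential_finite:
  fixes T :: "'i \<Rightarrow> 'a \<Rightarrow> real"
  assumes I: "finite I" "I \<noteq> {}"
    and distr: "\<And>i. i \<in> I \<Longrightarrow> distributed M lborel (T i) (exponential_density (r i))"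
    and r: "\<And>i. i \<in> I \<Longrightarrow> 0 < r i"
  shows "(\<integral>\<^sup>+\<omega>. ennreal (Max ((\<lambda>i. T i \<omega>) ` I)) \<partial>M) < \<infinity>"
proof -
  have [measurable]: "T i \<in> borel_measurable M" if "i \<in> I" for i
    using distributed_measurable[OF distr[OF that]] by simp
  have "(\<integral>\<^sup>+\<omega>. ennreal (T i \<omega>) \<partial>M) < \<infinity>" if "i \<in> I" for i
  proof -
    have "integrable M (\<lambda>x. T i x ^ 1)"
      using erlang_ith_moment_integrable[of "r i" "T i" 0 1] distr r that by simp
    then show ?thesis using integrableD(2) by (auto simp: less_top)
  qed
  then have "(\<Sum>i\<in>I. \<integral>\<^sup>+\<omega>. ennreal (T i \<omega>) \<partial>M) < \<infinity>"
    by (simp add: ennreal_sum_less_top I)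
  moreover have "(\<integral>\<^sup>+\<omega>. ennreal (Max ((\<lambda>i. T i \<omega>) ` I)) \<partial>M)
      \<le> (\<integral>\<^sup>+\<omega>. (\<Sum>i\<in>I. ennreal (T i \<omega>)) \<partial>M)"
  proof (rule nn_integral_mono)
    fix \<omega>
    have "Max ((\<lambda>i. T i \<omega>) ` I) \<in> (\<lambda>i. T i \<omega>) ` I"
      using I by (intro Max_in) auto
    then obtain j where "j \<in> I" "Max ((\<lambda>i. T i \<omega>) ` I) = T j \<omega>" by auto
    then show "ennreal (Max ((\<lambda>i. T i \<omega>) ` I)) \<le> (\<Sum>i\<in>I. ennreal (T i \<omega>))"
      using I by (metis member_le_sum zero_le)
  qed
  moreover have "(\<integral>\<^sup>+\<omega>. (\<Sum>i\<in>I. ennreal (T i \<omega>)) \<partial>M) = (\<Sum>i\<in>I. \<integral>\<^sup>+\<omega>. ennreal (T i \<omega>) \<partial>M)"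
    by (rule nn_integral_sum) auto
  ultimately show ?thesis by simp
qed

lemma nn_integral_Max_exponential:
  fixes T :: "'i \<Rightarrow> 'a \<Rightarrow> real"
  assumes I: "finite I" "I \<noteq> {}" and indep: "indep_vars (\<lambda>_. borel) T I"
    and distr: "\<And>i. i \<in> I \<Longrightarrow> distributed M lborel (T i) (exponential_density (r i))"
    and r: "\<And>i. i \<in> I \<Longrightarrow> 0 < r i"
  shows "(\<integral>\<^sup>+\<omega>. ennreal (Max ((\<lambda>i. T i \<omega>) ` I)) \<partial>M) =
    (\<integral>\<^sup>+t. ennreal (1 - (\<Prod>i\<in>I. 1 - exp (- t * r i))) * indicator {0..} t \<partial>lborel)"
proof -
  let ?X = "\<lambda>\<omega>. Max ((\<lambda>i. T i \<omega>) ` I)"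
  have [measurable]: "T i \<in> borel_measurable M" if "i \<in> I" for i
    using distributed_measurable[OF distr[OF that]] by simp
  have X_measurable: "?X \<in> borel_measurable M"
    using I(1) by (rule borel_measurable_Max) simp
  show ?thesis
    unfolding nn_integral_eq_nn_integral_tail[OF sigma_finite_measure_axioms X_measurable]
  proof (rule nn_integral_cong)
    fix t :: real
    show "emeasure M {x \<in> space M. t < ?X x} * indicator {0..} t =
          ennreal (1 - (\<Prod>i\<in>I. 1 - exp (- t * r i))) * indicator {0..} t"
    proof (cases "0 \<le> t")
      case True
      have "{x \<in> space M. t < ?X x} = space M - {x \<in> space M. ?X x \<le> t}" by auto
      then have "prob {x \<in> space M. t < ?X x} = 1 - prob {x \<in> space M. ?X x \<le> t}"
        using X_measurable by (simp add: prob_compl)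
      then show ?thesis using prob_Max_exponential_le[OF I indep distr r True]
        by (simp add: emeasure_eq_measure)
    qed simp
  qed
qed

lemma expectation_Max_exponential:
  fixes T :: "'i \<Rightarrow> 'a \<Rightarrow> real"
  assumes I: "finite I" "I \<noteq> {}" and indep: "indep_vars (\<lambda>_. borel) T I"
    and distr: "\<And>i. i \<in> I \<Longrightarrow> distributed M lborel (T i) (exponential_density (r i))"
    and r: "\<And>i. i \<in> I \<Longrightarrow> 0 < r i"
  shows "expectation (\<lambda>\<omega>. Max ((\<lambda>i. T i \<omega>) ` I)) =
    enn2real (\<integral>\<^sup>+t. ennreal (1 - (\<Prod>i\<in>I. 1 - exp (- t * r i))) * indicator {0..} t \<partial>lborel)"
proof -
  let ?X = "\<lambda>\<omega>. Max ((\<lambda>i. T i \<omega>) ` I)"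
  have [measurable]: "T i \<in> borel_measurable M" if "i \<in> I" for i
    using distributed_measurable[OF distr[OF that]] by simp
  have X_measurable: "?X \<in> borel_measurable M"
    using I(1) by (rule borel_measurable_Max) simp
  obtain j where j: "j \<in> I" using I by auto
  have "AE \<omega> in M. 0 \<le> T j \<omega>"
    by (subst distributed_AE2[OF distr[OF j]]) (auto simp: exponential_density_def)
  then have X_nonneg: "AE \<omega> in M. 0 \<le> ?X \<omega>"
    by eventually_elim (use I j in \<open>auto intro: order.trans[OF _ Max_ge]\<close>)
  show ?thesis
    using integral_eq_nn_integral[OF X_measurable X_nonneg]
      nn_integral_Max_exponential[OF I indep distr r] by simp
qed

end

lemma expectation_Max_exponential_mono:
  fixes T :: "'i \<Rightarrow> 'a \<Rightarrow> real" and T' :: "'i \<Rightarrow> 'b \<Rightarrow> real"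
  assumes "prob_space M" and "prob_space M'" and I: "finite I" "I \<noteq> {}"
    and "prob_space.indep_vars M (\<lambda>_. borel) T I"
    and distr: "\<And>i. i \<in> I \<Longrightarrow> distributed M lborel (T i) (exponential_density (r i))"
    and r: "\<And>i. i \<in> I \<Longrightarrow> 0 < r i"
    and "prob_space.indep_vars M' (\<lambda>_. borel) T' I"
    and "\<And>i. i \<in> I \<Longrightarrow> distributed M' lborel (T' i) (exponential_density (r' i))"
    and "\<And>i. i \<in> I \<Longrightarrow> 0 < r' i"
    and cdf_le: "\<And>t. 0 \<le> t \<Longrightarrow> (\<Prod>i\<in>I. 1 - exp (- t * r i)) \<le> (\<Prod>i\<in>I. 1 - exp (- t * r' i))"
  shows "prob_space.expectation M' (\<lambda>\<omega>. Max ((\<lambda>i. T' i \<omega>) ` I))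
    \<le> prob_space.expectation M (\<lambda>\<omega>. Max ((\<lambda>i. T i \<omega>) ` I))"
proof -
  let ?tail = "\<lambda>r t. ennreal (1 - (\<Prod>i\<in>I. 1 - exp (- t * r i))) * indicator {0..} (t :: real)"
  have tail_le: "?tail r' t \<le> ?tail r t" for t
    using cdf_le[of t] by (cases "0 \<le> t") (auto intro!: mult_right_mono ennreal_leI)
  have "(\<integral>\<^sup>+t. ?tail r t \<partial>lborel) < \<infinity>"
    using prob_space.nn_integral_Max_exponential[OF assms(1) I assms(5) distr r]
      prob_space.nn_integral_Max_exponential_finite[OF assms(1) I, of T r, OF distr r]
    by simp
  then have "enn2real (\<integral>\<^sup>+t. ?tail r' t \<partial>lborel) \<le> enn2real (\<integral>\<^sup>+t. ?tail r t \<partial>lborel)"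
    by (intro enn2real_mono nn_integral_mono tail_le) simp
  then show ?thesis
    using prob_space.expectation_Max_exponential[OF assms(1) I assms(5) distr r]
      prob_space.expectation_Max_exponential[OF assms(2) I assms(8-10)]
    by simp
qed

theorem theorem1:
  fixes N B :: nat and lam :: real and Nv :: "nat \<Rightarrow> nat"
    and M :: "'a measure" and T :: "nat \<Rightarrow> 'a \<Rightarrow> real"
    and M' :: "'b measure" and T' :: "nat \<Rightarrow> 'b \<Rightarrow> real"
  assumes "0 < N" and "0 < B" and "B dvd N" and "0 < lam"
    and "\<forall>i<B. 0 < Nv i" and "(\<Sum>i<B. Nv i) = N"
    and "prob_space M"
    and "prob_space.indep_vars M (\<lambda>_. borel) T {..<B}"
    and "\<forall>i<B. distributed M lborel (T i) (exponential_density (real (Nv i) * lam))"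
    and "prob_space M'"
    and "prob_space.indep_vars M' (\<lambda>_. borel) T' {..<B}"
    and "\<forall>i<B. distributed M' lborel (T' i) (exponential_density (real (N div B) * lam))"
  shows "prob_space.expectation M (\<lambda>\<omega>. Max ((\<lambda>i. T i \<omega>) ` {..<B}))
         \<ge> prob_space.expectation M' (\<lambda>\<omega>. Max ((\<lambda>i. T' i \<omega>) ` {..<B}))"
proof -
  let ?r = "\<lambda>i. real (Nv i) * lam" and ?\<rho> = "real (N div B) * lam"
  have I: "finite {..<B}" "{..<B} \<noteq> {}" using assms(2) by auto
  have r_pos: "\<And>i. i \<in> {..<B} \<Longrightarrow> 0 < ?r i" using assms(4,5) by simp
  have \<rho>_pos: "0 < ?\<rho>" using assms(1-4) by (auto elim!: dvdE)
  have mean_rate: "(\<Sum>i<B. ?r i) / card {..<B} = ?\<rho>"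
    using assms(2,3,6) by (simp add: real_of_nat_div sum_distrib_right[symmetric] of_nat_sum[symmetric])
  have "(\<Prod>i<B. 1 - exp (- t * ?r i)) \<le> (\<Prod>i<B. 1 - exp (- t * ?\<rho>))" if "0 \<le> t" for t
    using prod_one_minus_exp_le_balanced[OF I, of ?r, OF r_pos that] unfolding mean_rate .
  then show ?thesis
    using assms(7-12) r_pos \<rho>_pos
    by (intro expectation_Max_exponential_mono[OF assms(7,10) I, of T ?r T' "\<lambda>_. ?\<rho>"]) auto
qed

end
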